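(* Let $k\ge1$ and let $\mathbf{G}\in\mathbb{F}_2^{k\times(2^k-1)}$ be a generator matrix of the $[2^k-1,k,2^{k-1}]_2$ binary simplex code, i.e. its columns are all the nonzero vectors of $\mathbb{F}_2^k$ (each exactly once). For each $i\in[k]$ let the recovery sets of file $f_i$ be all recovery sets of size $1$ or $2$. Then the graph representation of this code is a bipartite graph.
   Context: Let $\mathbf{g}_1,\dots,\mathbf{g}_n$ ($n=2^k-1$) be the columns of $\mathbf{G}$ and $\mathbf{e}_i$ the $i$-th unit vector of $\mathbb{F}_2^k$. Here the recovery sets of size at most 2 for file $f_i$ are the sets $\{r\}$ with $\mathbf{g}_r=\mathbf{e}_i$ and the sets $\{a,b\}$, $a\neq b$, with $\mathbf{g}_a+\mathbf{g}_b=\mathbf{e}_i$. The graph representation is the (multi)graph whose vertex set is $[n]$ together with one new dummy vertex for each recovery set of size 1, and which has one edge per recovery set: a size-2 recovery set $\{a,b\}$ gives an edge between $a$ and $b$, and a size-1 recovery set $\{r\}$ gives an edge between $r$ and its dummy vertex. *)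

theory Defs
  imports Main
begin

text \<open>Vectors of F_2^k are represented as subsets of {1..k} (their supports);
  addition in F_2^k is symmetric difference, the unit vector e_i is {i}.
  A k x n binary matrix is represented by its columns g :: nat => nat set,
  g j being the column j (j in {1..n}).\<close>

definition vadd :: "nat set \<Rightarrow> nat set \<Rightarrow> nat set" where
  "vadd u v = (u - v) \<union> (v - u)"

definition unitv :: "nat \<Rightarrow> nat set" where
  "unitv i = {i}"

definition simplex_generator :: "nat \<Rightarrow> (nat \<Rightarrow> nat set) \<Rightarrow> bool" where
  "simplex_generator k g \<longleftrightarrow>
     bij_betw g {1..2^k - 1} {S. S \<subseteq> {1..k} \<and> S \<noteq> {}}"

definition recovery_sets :: "nat \<Rightarrow> (nat \<Rightarrow> nat set) \<Rightarrow> nat \<Rightarrow> nat set set" where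
  "recovery_sets n g i =
     {{r} | r. r \<in> {1..n} \<and> g r = unitv i} \<union>
     {{a, b} | a b. a \<in> {1..n} \<and> b \<in> {1..n} \<and> a \<noteq> b \<and> vadd (g a) (g b) = unitv i}"

datatype vertex = Col nat | Dummy nat nat  (* Dummy i r: dummy vertex of size-1 recovery set {r} of file i *)

definition graph_vertices :: "nat \<Rightarrow> nat \<Rightarrow> (nat \<Rightarrow> nat set) \<Rightarrow> vertex set" where
  "graph_vertices k n g =
     Col ` {1..n} \<union> {Dummy i r | i r. i \<in> {1..k} \<and> {r} \<in> recovery_sets n g i}"

definition graph_edges :: "nat \<Rightarrow> nat \<Rightarrow> (nat \<Rightarrow> nat set) \<Rightarrow> (nat \<times> nat set) set" where
  "graph_edges k n g = {(i, R). i \<in> {1..k} \<and> R \<in> recovery_sets n g i}"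

definition edge_ends :: "nat \<times> nat set \<Rightarrow> vertex \<times> vertex" where
  "edge_ends e = (case e of (i, R) \<Rightarrow>
     if card R = 1 then (Col (the_elem R), Dummy i (the_elem R))
     else (Col (Min R), Col (Max R)))"

definition bipartite :: "'v set \<Rightarrow> 'e set \<Rightarrow> ('e \<Rightarrow> 'v \<times> 'v) \<Rightarrow> bool" where
  "bipartite V E ends \<longleftrightarrow>
     (\<exists>A B. A \<inter> B = {} \<and> A \<union> B = V \<and>
        (\<forall>e\<in>E. (fst (ends e) \<in> A \<and> snd (ends e) \<in> B) \<or>
               (fst (ends e) \<in> B \<and> snd (ends e) \<in> A)))"

end

theory Submission
  imports Defs
begin

text \<open>Colour a column vertex by the parity of the Hamming weight of its column and every dummy
  vertex as even. A size-2 recovery set {a, b} of file i has g a + g b = e_i, and since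
  |u + v| = |u| + |v| - 2|u \<inter> v| the columns g a and g b have weights of different parity;
  a size-1 recovery set {r} has g r = e_i of odd weight, joined to an even dummy vertex.\<close>

lemma card_vadd:
  assumes "finite u" "finite v"
  shows "card u + card v = card (vadd u v) + 2 * card (u \<inter> v)"
proof -
  have "vadd u v = (u \<union> v) - (u \<inter> v)"
    unfolding vadd_def by blast
  then have "card (vadd u v) = card (u \<union> v) - card (u \<inter> v)"
    using assms by (simp add: card_Diff_subset Int_Un_eq(1) inf_sup_ord(1) le_supI1)
  moreover have "card (u \<inter> v) \<le> card (u \<union> v)"
    using assms by (intro card_mono) auto
  ultimately show ?thesis
    using card_Un_Int[OF assms] by simp
qed

lemma odd_card_vadd_singleton:
  assumes "finite u" "finite v" "vadd u v = {i}"
  shows "odd (card u) \<longleftrightarrow> even (card v)"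
proof -
  have "card u + card v = 1 + 2 * card (u \<inter> v)"
    using card_vadd[OF assms(1,2)] assms(3) by simp
  then show ?thesis by presburger
qed

lemma bipartiteI:
  fixes colour :: "'v \<Rightarrow> bool"
  assumes "\<And>e. e \<in> E \<Longrightarrow> fst (ends e) \<in> V \<and> snd (ends e) \<in> V"
    and "\<And>e. e \<in> E \<Longrightarrow> colour (fst (ends e)) \<noteq> colour (snd (ends e))"
  shows "bipartite V E ends"
  unfolding bipartite_def
proof (intro exI conjI ballI)
  fix e assume "e \<in> E"
  with assms show "fst (ends e) \<in> {v \<in> V. colour v} \<and> snd (ends e) \<in> {v \<in> V. \<not> colour v} \<or>
      fst (ends e) \<in> {v \<in> V. \<not> colour v} \<and> snd (ends e) \<in> {v \<in> V. colour v}"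
    by blast
qed auto

lemma graph_edgeE:
  assumes "e \<in> graph_edges k n g"
  obtains (singleton) i r where "i \<in> {1..k}" "r \<in> {1..n}" "g r = {i}"
      "edge_ends e = (Col r, Dummy i r)"
    | (pair) i a b where "a \<in> {1..n}" "b \<in> {1..n}" "vadd (g a) (g b) = {i}"
      "edge_ends e = (Col a, Col b)"
proof -
  obtain i R where e: "e = (i, R)" and i: "i \<in> {1..k}" and R: "R \<in> recovery_sets n g i"
    using assms unfolding graph_edges_def by blast
  have vadd_commute: "vadd u v = vadd v u" for u v
    unfolding vadd_def by blast
  from R consider (one) r where "R = {r}" "r \<in> {1..n}" "g r = {i}"
    | (two) a b where "R = {a, b}" "a \<in> {1..n}" "b \<in> {1..n}" "a \<noteq> b" "vadd (g a) (g b) = {i}"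
    unfolding recovery_sets_def unitv_def by blast
  then show thesis
  proof cases
    case one
    then show thesis using singleton i e by (simp add: edge_ends_def)
  next
    case two
    then have "edge_ends e = (Col (min a b), Col (max a b))"
      using e by (auto simp: edge_ends_def)
    with two show thesis
      using pair vadd_commute by (cases "a < b") (auto simp: min_def max_def)
  qed
qed

lemma edge_ends_in_graph_vertices:
  assumes "e \<in> graph_edges k n g"
  shows "fst (edge_ends e) \<in> graph_vertices k n g \<and> snd (edge_ends e) \<in> graph_vertices k n g"
  using assms
proof (cases rule: graph_edgeE)
  case (singleton i r)
  then have "{r} \<in> recovery_sets n g i"
    unfolding recovery_sets_def unitv_def by blast
  with singleton show ?thesis unfolding graph_vertices_def by auto
qed (auto simp: graph_vertices_def)

fun odd_weight :: "(nat \<Rightarrow> nat set) \<Rightarrow> vertex \<Rightarrow> bool" where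
  "odd_weight g (Col j) = odd (card (g j))"
| "odd_weight g (Dummy _ _) = False"

lemma odd_weight_edge_ends:
  assumes "\<And>j. j \<in> {1..n} \<Longrightarrow> finite (g j)" "e \<in> graph_edges k n g"
  shows "odd_weight g (fst (edge_ends e)) \<noteq> odd_weight g (snd (edge_ends e))"
  using assms(2)
proof (cases rule: graph_edgeE)
  case (pair i a b)
  then show ?thesis using odd_card_vadd_singleton[OF assms(1) assms(1)] by simp
qed simp

lemma simplex_generator_finite_columns:
  assumes "simplex_generator k g" "j \<in> {1..2^k - 1}"
  shows "finite (g j)"
proof -
  have "g j \<subseteq> {1..k}"
    using assms unfolding simplex_generator_def bij_betw_def by blast
  then show ?thesis using finite_subset by blast
qed

theorem theorem3:
  fixes k :: nat and g :: "nat \<Rightarrow> nat set"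
  assumes "k \<ge> 1"
    and "simplex_generator k g"
  shows "bipartite (graph_vertices k (2^k - 1) g) (graph_edges k (2^k - 1) g) edge_ends"
  by (rule bipartiteI[where colour = "odd_weight g"])
    (use edge_ends_in_graph_vertices odd_weight_edge_ends
       simplex_generator_finite_columns[OF assms(2)] in blast)+

end
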